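(* Let $m,n$ be positive integers. The number of $m\times n$ partial alternating sign matrices whose entries sum to $1$ is $\binom{m+n}{m}-1$.
   Context: An $m\times n$ partial alternating sign matrix is an $m\times n$ matrix with entries in $\{-1,0,1\}$ such that: the entries of each row and of each column sum to $0$ or $1$; the nonzero entries in each row and in each column alternate in sign; in each column the first (topmost) nonzero entry, if any, is $1$, and in each row the last (rightmost) nonzero entry, if any, is $1$. *)

theory Defs
  imports Main "HOL-Library.Sublist"
begin

text \<open>An m x n matrix is encoded as a function A :: nat => nat => int with
  rows indexed 0..<m and columns 0..<n; entries outside this range are required
  to be 0, so that each matrix has a unique representation.\<close>

definition row_list :: "(nat \<Rightarrow> nat \<Rightarrow> int) \<Rightarrow> nat \<Rightarrow> nat \<Rightarrow> int list" where
  "row_list A n i = map (\<lambda>j. A i j) [0..<n]"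

definition col_list :: "(nat \<Rightarrow> nat \<Rightarrow> int) \<Rightarrow> nat \<Rightarrow> nat \<Rightarrow> int list" where
  "col_list A m j = map (\<lambda>i. A i j) [0..<m]"

definition alternating :: "int list \<Rightarrow> bool" where
  "alternating xs \<longleftrightarrow>
     (let ys = filter (\<lambda>x. x \<noteq> 0) xs in
      \<forall>k. Suc k < length ys \<longrightarrow> sgn (ys ! k) \<noteq> sgn (ys ! Suc k))"

definition partial_asm :: "nat \<Rightarrow> nat \<Rightarrow> (nat \<Rightarrow> nat \<Rightarrow> int) \<Rightarrow> bool" where
  "partial_asm m n A \<longleftrightarrow>
     (\<forall>i j. (i \<ge> m \<or> j \<ge> n) \<longrightarrow> A i j = 0) \<and>
     (\<forall>i<m. \<forall>j<n. A i j \<in> {-1, 0, 1}) \<and>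
     (\<forall>i<m. sum_list (row_list A n i) \<in> {0, 1}) \<and>
     (\<forall>j<n. sum_list (col_list A m j) \<in> {0, 1}) \<and>
     (\<forall>i<m. alternating (row_list A n i)) \<and>
     (\<forall>j<n. alternating (col_list A m j)) \<and>
     (\<forall>j<n. filter (\<lambda>x. x \<noteq> 0) (col_list A m j) \<noteq> [] \<longrightarrow>
              hd (filter (\<lambda>x. x \<noteq> 0) (col_list A m j)) = 1) \<and>
     (\<forall>i<m. filter (\<lambda>x. x \<noteq> 0) (row_list A n i) \<noteq> [] \<longrightarrow>
              last (filter (\<lambda>x. x \<noteq> 0) (row_list A n i)) = 1)"

definition entry_sum :: "nat \<Rightarrow> nat \<Rightarrow> (nat \<Rightarrow> nat \<Rightarrow> int) \<Rightarrow> int" where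
  "entry_sum m n A = (\<Sum>i<m. \<Sum>j<n. A i j)"

end

theory Submission
  imports Defs "HOL-Library.Multiset"
begin

text \<open>
  The nonzero entries of a list over \<open>{-1, 0, 1}\<close> alternate in sign and begin with 1
  exactly when all its prefix sums lie in \<open>{0, 1}\<close>; symmetrically, ending with 1 corresponds
  to suffix sums. Hence \<open>A\<close> is a partial alternating sign matrix iff its corner-sum matrix
  \<open>P i j\<close>, the sum of \<open>A\<close> over the rows \<open>< i\<close> and columns \<open>\<ge> j\<close>, vanishes on the top
  and right borders and changes by 0 or 1 at each step down or to the left. If the total
  \<open>P m 0\<close> is 1, then \<open>P\<close> is a 0/1 matrix whose row \<open>i + 1\<close> consists of \<open>k\<^sub>i\<close> ones followed
  by zeros, with \<open>k\<^sub>0 \<le> \<dots> \<le> k\<^bsub>m-1\<^esub> \<le> n\<close> not all zero. Since \<open>A\<close> is the mixed second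
  difference of \<open>P\<close>, these matrices correspond to the multisets of size \<open>m\<close> over
  \<open>{0..n}\<close> other than the one concentrated at 0, and there are \<open>(m + n choose m) - 1\<close> of them.
\<close>

fun running_sums_01 :: "int \<Rightarrow> int list \<Rightarrow> bool" where
  "running_sums_01 b [] \<longleftrightarrow> b \<in> {0, 1}"
| "running_sums_01 b (x # xs) \<longleftrightarrow> b \<in> {0, 1} \<and> running_sums_01 (b + x) xs"

lemma running_sums_01_iff_take:
  "running_sums_01 b xs \<longleftrightarrow> (\<forall>k\<le>length xs. b + sum_list (take k xs) \<in> {0, 1})"
proof (induction xs arbitrary: b)
  case (Cons x xs)
  have split_first: "(\<forall>k\<le>Suc l. P k) \<longleftrightarrow> P 0 \<and> (\<forall>k\<le>l. P (Suc k))" for l and P :: "nat \<Rightarrow> bool"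
    using All_less_Suc2[of "Suc l" P] by (simp add: less_Suc_eq_le)
  show ?case
    unfolding length_Cons split_first by (simp add: Cons.IH add.assoc)
qed simp

lemma running_sums_01_start: "running_sums_01 b xs \<Longrightarrow> b \<in> {0, 1}"
  by (cases xs) auto

lemma running_sums_01_filter_nonzero:
  "running_sums_01 b (filter (\<lambda>x. x \<noteq> 0) xs) \<longleftrightarrow> running_sums_01 b xs"
  by (induction xs arbitrary: b) (auto dest: running_sums_01_start)

lemma successively_iff_nth:
  "successively P xs \<longleftrightarrow> (\<forall>k. Suc k < length xs \<longrightarrow> P (xs ! k) (xs ! Suc k))"
proof (induction xs)
  case (Cons x xs)
  have "(\<forall>k. Suc k < length (x # xs) \<longrightarrow> P ((x # xs) ! k) ((x # xs) ! Suc k)) \<longleftrightarrow>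
        (\<forall>k<length xs. P ((x # xs) ! k) (xs ! k))"
    by simp
  also have "\<dots> \<longleftrightarrow> xs = [] \<or> P x (hd xs) \<and> (\<forall>k. Suc k < length xs \<longrightarrow> P (xs ! k) (xs ! Suc k))"
    by (cases xs) (simp_all add: All_less_Suc2)
  finally show ?case
    by (simp add: successively_Cons Cons.IH)
qed simp

lemma alternating_iff_successively:
  "alternating xs \<longleftrightarrow> successively (\<lambda>x y. sgn x \<noteq> sgn y) (filter (\<lambda>x. x \<noteq> 0) xs)"
  by (simp add: alternating_def successively_iff_nth Let_def)

lemma running_sums_01_sign_list:
  assumes "set ys \<subseteq> {-1, 1}" and "b \<in> {0, 1}"
  shows "running_sums_01 b ys \<longleftrightarrow>
           successively (\<lambda>x y. sgn x \<noteq> sgn y) ys \<and> (ys \<noteq> [] \<longrightarrow> hd ys = 1 - 2 * b)"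
  using assms
proof (induction ys arbitrary: b)
  case (Cons y ys)
  show ?case
  proof (cases "b + y \<in> {0, 1}")
    case True
    have y: "y \<in> {-1, 1}" and ys: "set ys \<subseteq> {-1, 1}"
      using Cons.prems(1) by auto
    have y_eq: "y = 1 - 2 * b"
      using True y Cons.prems(2) by auto
    have hd_ys: "sgn y \<noteq> sgn (hd ys) \<longleftrightarrow> hd ys = -y" if "ys \<noteq> []"
    proof -
      have "hd ys \<in> {-1, 1}"
        using ys hd_in_set[OF that] by blast
      then show ?thesis
        using y by auto
    qed
    have "running_sums_01 b (y # ys) \<longleftrightarrow> running_sums_01 (b + y) ys"
      using Cons.prems(2) by simp
    also have "\<dots> \<longleftrightarrow> successively (\<lambda>x y. sgn x \<noteq> sgn y) ys \<and> (ys \<noteq> [] \<longrightarrow> hd ys = -y)"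
      using Cons.IH[OF ys True] y_eq by simp
    also have "\<dots> \<longleftrightarrow> successively (\<lambda>x y. sgn x \<noteq> sgn y) (y # ys) \<and> hd (y # ys) = 1 - 2 * b"
      using hd_ys y_eq by (auto simp: successively_Cons)
    finally show ?thesis
      by simp
  next
    case False
    then have "\<not> running_sums_01 (b + y) ys" and "y \<noteq> 1 - 2 * b"
      using running_sums_01_start Cons.prems(2) by auto
    then show ?thesis
      by simp
  qed
qed simp

lemma alternating_first_one_iff_prefix_sums:
  assumes "set xs \<subseteq> {-1, 0, 1}"
  shows "alternating xs \<and>
           (filter (\<lambda>x. x \<noteq> 0) xs \<noteq> [] \<longrightarrow> hd (filter (\<lambda>x. x \<noteq> 0) xs) = 1) \<and>
           sum_list xs \<in> {0, 1} \<longleftrightarrow>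
         (\<forall>k\<le>length xs. sum_list (take k xs) \<in> {0, 1})"
proof -
  let ?ys = "filter (\<lambda>x. x \<noteq> 0) xs"
  have "set ?ys \<subseteq> {-1, 1}"
    using assms by auto
  then have "(\<forall>k\<le>length xs. sum_list (take k xs) \<in> {0, 1}) \<longleftrightarrow>
             alternating xs \<and> (?ys \<noteq> [] \<longrightarrow> hd ?ys = 1)"
    using running_sums_01_iff_take[of 0 xs] running_sums_01_filter_nonzero[of 0 xs]
      running_sums_01_sign_list[of ?ys 0]
    by (simp add: alternating_iff_successively)
  moreover have "sum_list xs \<in> {0, 1}" if "\<forall>k\<le>length xs. sum_list (take k xs) \<in> {0, 1}"
    using that[rule_format, of "length xs"] by simp
  ultimately show ?thesis
    by blast
qed

lemma alternating_rev: "alternating (rev xs) \<longleftrightarrow> alternating xs"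
  by (simp add: alternating_iff_successively eq_commute flip: rev_filter)

lemma alternating_last_one_iff_suffix_sums:
  assumes "set xs \<subseteq> {-1, 0, 1}"
  shows "alternating xs \<and>
           (filter (\<lambda>x. x \<noteq> 0) xs \<noteq> [] \<longrightarrow> last (filter (\<lambda>x. x \<noteq> 0) xs) = 1) \<and>
           sum_list xs \<in> {0, 1} \<longleftrightarrow>
         (\<forall>k\<le>length xs. sum_list (drop k xs) \<in> {0, 1})"
proof -
  have "(\<forall>k\<le>length xs. sum_list (take k (rev xs)) \<in> {0, 1}) \<longleftrightarrow>
        (\<forall>k\<le>length xs. sum_list (drop k xs) \<in> {0, 1})"
    by (auto simp: take_rev) (metis diff_diff_cancel diff_le_self, metis diff_le_self)
  then show ?thesis
    using alternating_first_one_iff_prefix_sums[of "rev xs"] assms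
    by (simp add: alternating_rev hd_rev flip: rev_filter)
qed

lemma sum_list_take_col_list:
  "k \<le> m \<Longrightarrow> sum_list (take k (col_list A m j)) = (\<Sum>i<k. A i j)"
  by (simp add: col_list_def take_map min_def interv_sum_list_conv_sum_set_nat atLeast0LessThan)

lemma sum_list_drop_row_list:
  "sum_list (drop k (row_list A n i)) = (\<Sum>j'=k..<n. A i j')"
  by (simp add: row_list_def drop_map interv_sum_list_conv_sum_set_nat)

lemma entry_in_range_if_suffix_sums:
  fixes A :: "nat \<Rightarrow> nat \<Rightarrow> int"
  assumes "\<forall>j\<le>n. (\<Sum>j'=j..<n. A i j') \<in> {0, 1}" and "j < n"
  shows "A i j \<in> {-1, 0, 1}"
proof -
  have "A i j = (\<Sum>j'=j..<n. A i j') - (\<Sum>j'=Suc j..<n. A i j')"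
    using \<open>j < n\<close> by (simp add: sum.atLeast_Suc_lessThan)
  then show ?thesis
    using assms(1)[rule_format, of j] assms(1)[rule_format, of "Suc j"] \<open>j < n\<close> by auto
qed

lemma col_list_conditions_iff_prefix_sums:
  assumes "\<forall>i<m. A i j \<in> {-1, 0, 1}"
  shows "alternating (col_list A m j) \<and>
           (filter (\<lambda>x. x \<noteq> 0) (col_list A m j) \<noteq> [] \<longrightarrow>
              hd (filter (\<lambda>x. x \<noteq> 0) (col_list A m j)) = 1) \<and>
           sum_list (col_list A m j) \<in> {0, 1} \<longleftrightarrow>
         (\<forall>i\<le>m. (\<Sum>i'<i. A i' j) \<in> {0, 1})"
proof -
  have "set (col_list A m j) \<subseteq> {-1, 0, 1}"
    using assms by (auto simp: col_list_def)
  moreover have "length (col_list A m j) = m"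
    by (simp add: col_list_def)
  ultimately show ?thesis
    using alternating_first_one_iff_prefix_sums[of "col_list A m j"]
    by (simp add: sum_list_take_col_list)
qed

lemma row_list_conditions_iff_suffix_sums:
  assumes "\<forall>j<n. A i j \<in> {-1, 0, 1}"
  shows "alternating (row_list A n i) \<and>
           (filter (\<lambda>x. x \<noteq> 0) (row_list A n i) \<noteq> [] \<longrightarrow>
              last (filter (\<lambda>x. x \<noteq> 0) (row_list A n i)) = 1) \<and>
           sum_list (row_list A n i) \<in> {0, 1} \<longleftrightarrow>
         (\<forall>j\<le>n. (\<Sum>j'=j..<n. A i j') \<in> {0, 1})"
proof -
  have "set (row_list A n i) \<subseteq> {-1, 0, 1}"
    using assms by (auto simp: row_list_def)
  moreover have "length (row_list A n i) = n"
    by (simp add: row_list_def)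
  ultimately show ?thesis
    using alternating_last_one_iff_suffix_sums[of "row_list A n i"]
    by (simp add: sum_list_drop_row_list)
qed

lemma partial_asm_iff_line_sums:
  "partial_asm m n A \<longleftrightarrow>
     (\<forall>i j. (i \<ge> m \<or> j \<ge> n) \<longrightarrow> A i j = 0) \<and>
     (\<forall>j<n. \<forall>i\<le>m. (\<Sum>i'<i. A i' j) \<in> {0, 1}) \<and>
     (\<forall>i<m. \<forall>j\<le>n. (\<Sum>j'=j..<n. A i j') \<in> {0, 1})"
proof (cases "\<forall>i<m. \<forall>j<n. A i j \<in> {-1, 0, 1}")
  case True
  have "partial_asm m n A \<longleftrightarrow>
      (\<forall>i j. (i \<ge> m \<or> j \<ge> n) \<longrightarrow> A i j = 0) \<and>
      (\<forall>j<n. alternating (col_list A m j) \<and>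
        (filter (\<lambda>x. x \<noteq> 0) (col_list A m j) \<noteq> [] \<longrightarrow>
           hd (filter (\<lambda>x. x \<noteq> 0) (col_list A m j)) = 1) \<and>
        sum_list (col_list A m j) \<in> {0, 1}) \<and>
      (\<forall>i<m. alternating (row_list A n i) \<and>
        (filter (\<lambda>x. x \<noteq> 0) (row_list A n i) \<noteq> [] \<longrightarrow>
           last (filter (\<lambda>x. x \<noteq> 0) (row_list A n i)) = 1) \<and>
        sum_list (row_list A n i) \<in> {0, 1})"
    using True unfolding partial_asm_def by blast
  also have "\<dots> \<longleftrightarrow>
      (\<forall>i j. (i \<ge> m \<or> j \<ge> n) \<longrightarrow> A i j = 0) \<and>
      (\<forall>j<n. \<forall>i\<le>m. (\<Sum>i'<i. A i' j) \<in> {0, 1}) \<and>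
      (\<forall>i<m. \<forall>j\<le>n. (\<Sum>j'=j..<n. A i j') \<in> {0, 1})"
    using True col_list_conditions_iff_prefix_sums row_list_conditions_iff_suffix_sums
    by (intro conj_cong refl all_cong) simp_all
  finally show ?thesis .
next
  case False
  then have "\<not> partial_asm m n A"
    unfolding partial_asm_def by blast
  moreover have "\<not> (\<forall>i<m. \<forall>j\<le>n. (\<Sum>j'=j..<n. A i j') \<in> {0, 1})"
    using False entry_in_range_if_suffix_sums by blast
  ultimately show ?thesis
    by blast
qed

definition corner_sum :: "nat \<Rightarrow> (nat \<Rightarrow> nat \<Rightarrow> int) \<Rightarrow> nat \<Rightarrow> nat \<Rightarrow> int" where
  "corner_sum n A i j = (\<Sum>i'<i. \<Sum>j'=j..<n. A i' j')"

lemma corner_sum_top [simp]: "corner_sum n A 0 j = 0"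
  by (simp add: corner_sum_def)

lemma corner_sum_right [simp]: "corner_sum n A i n = 0"
  by (simp add: corner_sum_def)

lemma corner_sum_Suc_row:
  "corner_sum n A (Suc i) j = corner_sum n A i j + (\<Sum>j'=j..<n. A i j')"
  by (simp add: corner_sum_def)

lemma corner_sum_Suc_col:
  "j < n \<Longrightarrow> corner_sum n A i j = corner_sum n A i (Suc j) + (\<Sum>i'<i. A i' j)"
  by (simp add: corner_sum_def sum.atLeast_Suc_lessThan sum.distrib)

lemma entry_sum_eq_corner_sum: "entry_sum m n A = corner_sum n A m 0"
  by (simp add: entry_sum_def corner_sum_def atLeast0LessThan)

lemma partial_asm_iff_corner_sum:
  "partial_asm m n A \<longleftrightarrow>
     (\<forall>i j. (i \<ge> m \<or> j \<ge> n) \<longrightarrow> A i j = 0) \<and>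
     (\<forall>i\<le>m. \<forall>j<n. corner_sum n A i j - corner_sum n A i (Suc j) \<in> {0, 1}) \<and>
     (\<forall>i<m. \<forall>j\<le>n. corner_sum n A (Suc i) j - corner_sum n A i j \<in> {0, 1})"
  unfolding partial_asm_iff_line_sums by (auto simp: corner_sum_Suc_row corner_sum_Suc_col)

definition of_corner_sums :: "nat \<Rightarrow> nat \<Rightarrow> (nat \<Rightarrow> nat \<Rightarrow> int) \<Rightarrow> nat \<Rightarrow> nat \<Rightarrow> int" where
  "of_corner_sums m n Q i j =
     (if i < m \<and> j < n then (Q (Suc i) j - Q i j) - (Q (Suc i) (Suc j) - Q i (Suc j)) else 0)"

lemma of_corner_sums_cong:
  "(\<And>i j. i \<le> m \<Longrightarrow> j \<le> n \<Longrightarrow> Q i j = Q' i j) \<Longrightarrow> of_corner_sums m n Q = of_corner_sums m n Q'"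
  by (simp add: of_corner_sums_def fun_eq_iff)

lemma of_corner_sums_corner_sum:
  assumes "\<forall>i j. (i \<ge> m \<or> j \<ge> n) \<longrightarrow> A i j = 0"
  shows "of_corner_sums m n (corner_sum n A) = A"
proof (intro ext)
  fix i j
  show "of_corner_sums m n (corner_sum n A) i j = A i j"
    using assms by (auto simp: of_corner_sums_def corner_sum_Suc_row sum.atLeast_Suc_lessThan)
qed

lemma corner_sum_of_corner_sums:
  assumes "\<And>j. Q 0 j = 0" and "\<And>i. i \<le> m \<Longrightarrow> Q i n = 0" and "i \<le> m" and "j \<le> n"
  shows "corner_sum n (of_corner_sums m n Q) i j = Q i j"
  using \<open>i \<le> m\<close> \<open>j \<le> n\<close>
proof (induction i arbitrary: j)
  case (Suc i)
  define g where "g t = Q (Suc i) t - Q i t" for t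
  have "(\<Sum>j'=j..<n. of_corner_sums m n Q i j') = (\<Sum>j'=j..<n. g j' - g (Suc j'))"
    using Suc.prems by (intro sum.cong) (auto simp: of_corner_sums_def g_def)
  also have "\<dots> = - (\<Sum>j'=j..<n. g (Suc j') - g j')"
    by (simp add: sum_negf[symmetric])
  also have "\<dots> = g j - g n"
    using sum_Suc_diff'[OF \<open>j \<le> n\<close>, of g] by simp
  finally show ?case
    using Suc assms(2)[of i] assms(2)[of "Suc i"] by (simp add: corner_sum_Suc_row g_def)
qed (simp add: assms(1))

lemma antimono_01_threshold:
  fixes f :: "nat \<Rightarrow> int"
  assumes antimono: "\<And>j. j < n \<Longrightarrow> f (Suc j) \<le> f j"
    and range: "\<And>j. j \<le> n \<Longrightarrow> f j \<in> {0, 1}" and "f n = 0"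
  obtains k where "k \<le> n" and "\<And>j. j \<le> n \<Longrightarrow> f j = of_bool (j < k)"
proof
  define k where "k = (LEAST j. f j = 0)"
  show "k \<le> n"
    unfolding k_def using \<open>f n = 0\<close> by (rule Least_le)
  fix j assume "j \<le> n"
  show "f j = of_bool (j < k)"
  proof (cases "j < k")
    case True
    then have "f j \<noteq> 0"
      unfolding k_def by (rule not_less_Least)
    then show ?thesis
      using True range[OF \<open>j \<le> n\<close>] by simp
  next
    case False
    have "f k = 0"
      unfolding k_def using \<open>f n = 0\<close> by (rule LeastI)
    moreover have "f j \<le> f k"
      using False \<open>j \<le> n\<close> antimono by (intro lift_Suc_antimono_le_ivl[of "{..<n}" f k j]) auto
    ultimately show ?thesis
      using False range[OF \<open>j \<le> n\<close>] by simp
  qed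
qed

lemma corner_sum_mono_row:
  assumes "partial_asm m n A" and "i \<le> i'" and "i' \<le> m" and "j \<le> n"
  shows "corner_sum n A i j \<le> corner_sum n A i' j"
proof (rule lift_Suc_mono_le_ivl[of "{..<m}" "\<lambda>i. corner_sum n A i j"])
  show "corner_sum n A k j \<le> corner_sum n A (Suc k) j" if "k \<in> {..<m}" for k
    using assms(1,4) that unfolding partial_asm_iff_corner_sum by fastforce
qed (use assms in auto)

lemma corner_sum_antimono_col:
  assumes "partial_asm m n A" and "i \<le> m" and "j \<le> j'" and "j' \<le> n"
  shows "corner_sum n A i j' \<le> corner_sum n A i j"
proof (rule lift_Suc_antimono_le_ivl[of "{..<n}" "corner_sum n A i"])
  show "corner_sum n A i (Suc k) \<le> corner_sum n A i k" if "k \<in> {..<n}" for k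
    using assms(1,2) that unfolding partial_asm_iff_corner_sum by fastforce
qed (use assms in auto)

lemma corner_sum_01:
  assumes "partial_asm m n A" and "entry_sum m n A = 1" and "i \<le> m" and "j \<le> n"
  shows "corner_sum n A i j \<in> {0, 1}"
proof -
  have "0 \<le> corner_sum n A i j"
    using corner_sum_mono_row[OF assms(1), of 0 i j] assms(3,4) by simp
  moreover have "corner_sum n A i j \<le> corner_sum n A m 0"
    using corner_sum_mono_row[OF assms(1), of i m j] corner_sum_antimono_col[OF assms(1), of m 0 j]
      assms(3,4) by simp
  ultimately show ?thesis
    using assms(2) by (auto simp: entry_sum_eq_corner_sum)
qed

text \<open>Row 0 of a corner-sum matrix is its top border, so row \<open>i + 1\<close> is governed by \<open>xs ! i\<close>.\<close>
definition staircase :: "nat list \<Rightarrow> nat \<Rightarrow> nat \<Rightarrow> int" where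
  "staircase xs i j = of_bool (0 < i \<and> j < xs ! (i - 1))"

definition sorted_lists :: "nat \<Rightarrow> nat \<Rightarrow> nat list set" where
  "sorted_lists m n = {xs. length xs = m \<and> sorted xs \<and> set xs \<subseteq> {0..n}}"

lemma sorted_lists_nth_le: "xs \<in> sorted_lists m n \<Longrightarrow> k < m \<Longrightarrow> xs ! k \<le> n"
  by (auto simp: sorted_lists_def dest: nth_mem)

lemma staircase_0 [simp]: "staircase xs 0 j = 0"
  and staircase_Suc [simp]: "staircase xs (Suc i) j = of_bool (j < xs ! i)"
  by (simp_all add: staircase_def)

lemma corner_sum_staircase:
  assumes "xs \<in> sorted_lists m n" and "i \<le> m" and "j \<le> n"
  shows "corner_sum n (of_corner_sums m n (staircase xs)) i j = staircase xs i j"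
proof (rule corner_sum_of_corner_sums)
  show "staircase xs i n = 0" if "i \<le> m" for i
  proof (cases i)
    case (Suc k)
    then have "xs ! k \<le> n"
      using sorted_lists_nth_le[OF assms(1)] that by simp
    then show ?thesis
      using Suc by simp
  qed simp
qed (use assms in simp_all)

lemma partial_asm_staircase:
  assumes "xs \<in> sorted_lists m n"
  shows "partial_asm m n (of_corner_sums m n (staircase xs))"
  unfolding partial_asm_iff_corner_sum
proof (intro conjI allI impI)
  show "of_corner_sums m n (staircase xs) i j = 0" if "m \<le> i \<or> n \<le> j" for i j
    using that by (auto simp: of_corner_sums_def)
  show "corner_sum n (of_corner_sums m n (staircase xs)) i j -
          corner_sum n (of_corner_sums m n (staircase xs)) i (Suc j) \<in> {0, 1}"
    if "i \<le> m" and "j < n" for i j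
    using that by (auto simp: corner_sum_staircase[OF assms] staircase_def)
  show "corner_sum n (of_corner_sums m n (staircase xs)) (Suc i) j -
          corner_sum n (of_corner_sums m n (staircase xs)) i j \<in> {0, 1}"
    if "i < m" and "j \<le> n" for i j
  proof (cases i)
    case (Suc k)
    then have "xs ! k \<le> xs ! i"
      using that assms by (simp add: sorted_lists_def sorted_nth_mono)
    then show ?thesis
      using that Suc by (simp add: corner_sum_staircase[OF assms])
  qed (use that in \<open>simp add: corner_sum_staircase[OF assms]\<close>)
qed

lemma sorted_neq_replicate_0_iff:
  fixes xs :: "nat list"
  assumes "sorted xs"
  shows "xs \<noteq> replicate (length xs) 0 \<longleftrightarrow> xs \<noteq> [] \<and> 0 < last xs"
proof
  assume "xs \<noteq> replicate (length xs) 0"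
  then obtain k where k: "k < length xs" "xs ! k \<noteq> 0"
    by (metis replicate_eqI in_set_conv_nth)
  moreover from k have "xs \<noteq> []"
    by auto
  ultimately have "xs ! k \<le> last xs"
    using assms by (simp add: last_conv_nth sorted_nth_mono)
  then show "xs \<noteq> [] \<and> 0 < last xs"
    using k by auto
next
  assume "xs \<noteq> [] \<and> 0 < last xs"
  then show "xs \<noteq> replicate (length xs) 0"
    by (metis last_replicate length_0_conv less_irrefl)
qed

lemma entry_sum_staircase:
  assumes "xs \<in> sorted_lists m n"
  shows "entry_sum m n (of_corner_sums m n (staircase xs)) = of_bool (xs \<noteq> replicate m 0)"
proof -
  have xs: "length xs = m" "sorted xs"
    using assms by (simp_all add: sorted_lists_def)
  have "entry_sum m n (of_corner_sums m n (staircase xs)) = staircase xs m 0"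
    by (simp add: entry_sum_eq_corner_sum corner_sum_staircase[OF assms])
  also have "\<dots> = of_bool (xs \<noteq> [] \<and> 0 < last xs)"
  proof (cases "xs = []")
    case False
    then have "0 < m"
      using xs(1) by auto
    then show ?thesis
      using False xs(1) by (simp add: staircase_def last_conv_nth)
  qed (use xs(1) in \<open>simp add: staircase_def\<close>)
  also have "\<dots> = of_bool (xs \<noteq> replicate m 0)"
    using sorted_neq_replicate_0_iff[OF xs(2)] xs(1) by simp
  finally show ?thesis .
qed

lemma inj_on_of_corner_sums_staircase:
  "inj_on (\<lambda>xs. of_corner_sums m n (staircase xs)) (sorted_lists m n)"
proof (rule inj_onI)
  fix xs ys
  assume xs: "xs \<in> sorted_lists m n" and ys: "ys \<in> sorted_lists m n"
    and eq: "of_corner_sums m n (staircase xs) = of_corner_sums m n (staircase ys)"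
  have row: "of_bool (j < xs ! k) = (of_bool (j < ys ! k) :: int)" if "k < m" and "j \<le> n" for k j
    using corner_sum_staircase[OF xs, of "Suc k" j] corner_sum_staircase[OF ys, of "Suc k" j] eq that
    by simp
  show "xs = ys"
  proof (rule nth_equalityI)
    show "length xs = length ys"
      using xs ys by (simp add: sorted_lists_def)
    fix k assume "k < length xs"
    then have k: "k < m"
      using xs by (simp add: sorted_lists_def)
    then have "xs ! k \<le> n" "ys ! k \<le> n"
      using xs ys by (simp_all add: sorted_lists_nth_le)
    then show "xs ! k = ys ! k"
      using row[OF k, of "xs ! k"] row[OF k, of "ys ! k"] by (cases "xs ! k < ys ! k") auto
  qed
qed

lemma corner_sum_row_threshold:
  assumes "partial_asm m n A" and "entry_sum m n A = 1" and "i < m"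
  shows "\<exists>k\<le>n. \<forall>j\<le>n. corner_sum n A (Suc i) j = of_bool (j < k)"
proof -
  have "corner_sum n A (Suc i) (Suc j) \<le> corner_sum n A (Suc i) j" if "j < n" for j
    using corner_sum_antimono_col[OF assms(1)] assms(3) that by simp
  then obtain k where "k \<le> n" "\<And>j. j \<le> n \<Longrightarrow> corner_sum n A (Suc i) j = of_bool (j < k)"
    using antimono_01_threshold[of n "corner_sum n A (Suc i)"] corner_sum_01[OF assms(1,2)] assms(3)
    by auto
  then show ?thesis
    by blast
qed

lemma partial_asm_sum_one_staircaseE:
  assumes "partial_asm m n A" and "entry_sum m n A = 1"
  obtains xs where "xs \<in> sorted_lists m n" and "A = of_corner_sums m n (staircase xs)"
proof -
  let ?P = "corner_sum n A"
  obtain k where k: "\<And>i. i < m \<Longrightarrow> k i \<le> n"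
    and row: "\<And>i j. i < m \<Longrightarrow> j \<le> n \<Longrightarrow> ?P (Suc i) j = of_bool (j < k i)"
    using corner_sum_row_threshold[OF assms] by metis
  define xs where "xs = map k [0..<m]"
  have P_eq: "?P i j = staircase xs i j" if "i \<le> m" and "j \<le> n" for i j
    using that by (cases i) (simp_all add: row xs_def)
  have "k i \<le> k (Suc i)" if "Suc i < m" for i
  proof (rule ccontr)
    assume "\<not> k i \<le> k (Suc i)"
    then have "?P (Suc (Suc i)) (k (Suc i)) < ?P (Suc i) (k (Suc i))"
      using row[of i "k (Suc i)"] row[of "Suc i" "k (Suc i)"] k[of "Suc i"] that by simp
    moreover have "?P (Suc i) (k (Suc i)) \<le> ?P (Suc (Suc i)) (k (Suc i))"
      using corner_sum_mono_row[OF assms(1)] k[of "Suc i"] that by simp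
    ultimately show False
      by simp
  qed
  then have "xs \<in> sorted_lists m n"
    using k by (auto simp: sorted_lists_def xs_def sorted_iff_nth_Suc)
  moreover have "A = of_corner_sums m n (staircase xs)"
    using of_corner_sums_corner_sum[of m n A] assms(1) of_corner_sums_cong[OF P_eq]
    by (simp add: partial_asm_iff_corner_sum)
  ultimately show ?thesis
    using that by blast
qed

lemma partial_asm_sum_one_eq_image_staircase:
  "{A. partial_asm m n A \<and> entry_sum m n A = 1} =
     (\<lambda>xs. of_corner_sums m n (staircase xs)) ` (sorted_lists m n - {replicate m 0})"
proof (intro equalityI subsetI)
  fix A assume "A \<in> {A. partial_asm m n A \<and> entry_sum m n A = 1}"
  then have A: "partial_asm m n A" "entry_sum m n A = 1"
    by simp_all
  then obtain xs where xs: "xs \<in> sorted_lists m n" and A_eq: "A = of_corner_sums m n (staircase xs)"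
    by (rule partial_asm_sum_one_staircaseE)
  then have "xs \<noteq> replicate m 0"
    using A(2) entry_sum_staircase[OF xs] by auto
  then show "A \<in> (\<lambda>xs. of_corner_sums m n (staircase xs)) ` (sorted_lists m n - {replicate m 0})"
    using xs A_eq by blast
qed (auto simp: partial_asm_staircase entry_sum_staircase)

lemma bij_betw_mset_sorted_lists:
  "bij_betw mset (sorted_lists m n) (multisets_of_size {0..n} m)"
proof (rule bij_betw_byWitness[where f' = sorted_list_of_multiset])
  show "\<forall>xs\<in>sorted_lists m n. sorted_list_of_multiset (mset xs) = xs"
    by (simp add: sorted_lists_def sorted_sort_id)
  show "\<forall>M\<in>multisets_of_size {0..n} m. mset (sorted_list_of_multiset M) = M"
    by simp
  show "mset ` sorted_lists m n \<subseteq> multisets_of_size {0..n} m"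
    by (auto simp: sorted_lists_def multisets_of_size_def)
  show "sorted_list_of_multiset ` multisets_of_size {0..n} m \<subseteq> sorted_lists m n"
    by (auto simp: sorted_lists_def multisets_of_size_def simp flip: size_mset)
qed

lemma card_sorted_lists: "card (sorted_lists m n) = (m + n) choose m"
  using bij_betw_same_card[OF bij_betw_mset_sorted_lists] by (simp add: card_multisets_of_size add.commute)

lemma finite_sorted_lists: "finite (sorted_lists m n)"
  using bij_betw_finite[OF bij_betw_mset_sorted_lists] by blast

theorem corollary3p22:
  fixes m n :: nat
  assumes "m > 0" and "n > 0"
  shows "card {A. partial_asm m n A \<and> entry_sum m n A = 1} = ((m + n) choose m) - 1"
proof -
  have "replicate m 0 \<in> sorted_lists m n"
    by (cases m) (auto simp: sorted_lists_def)
  then have "card (sorted_lists m n - {replicate m 0}) = ((m + n) choose m) - 1"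
    by (simp add: finite_sorted_lists card_sorted_lists)
  then show ?thesis
    unfolding partial_asm_sum_one_eq_image_staircase
    by (simp add: card_image inj_on_subset[OF inj_on_of_corner_sums_staircase])
qed

end
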